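(* Let $G$ and $H$ be graphs. (i) If $G$ has a point-finite and honest $H$-decomposition into connected parts of finitely bounded size and $H$ is accessible, then $G$ is accessible. (ii) If $G$ has an honest $H$-decomposition into finite connected parts such that the graphs $H_v\subseteq H$ ($v\in V(G)$) have finitely bounded order and $G$ is accessible, then $H$ is accessible.
   Context: An $H$-decomposition of $G$ is a pair $(H,(G_h)_{h\in H})$ of subgraphs $G_h\subseteq G$ with $G=\bigcup_h G_h$ and, for every vertex $v$ of $G$, $H_v:=H[\{h:v\in G_h\}]$ connected. It is point-finite if every $H_v$ is finite and honest if $G_h\cap G_{h'}\neq\emptyset$ for every edge $hh'$ of $H$; its parts are the $G_h$. An end of a graph is an equivalence class of rays, two rays being equivalent if for every finite vertex set $X$ they have tails in the same component of the graph minus $X$. A separation of a graph is $\{A,B\}$ with $A\cup B$ the vertex set and no edge between $A\setminus B$ and $B\setminus A$, of order $|A\cap B|$; a finite-order separation distinguishes two ends if rays of one have tails in the subgraph induced by $A$ and rays of the other have tails in that induced by $B$. A graph is accessible if there is $K\in\mathbb{N}$ such that every two of its ends are distinguished by a separation of order at most $K$. *)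

theory Defs
  imports Main
begin

type_synonym 'a graph = "'a set \<times> ('a \<times> 'a) set"

definition verts :: "'a graph \<Rightarrow> 'a set" where "verts G = fst G"
definition edges :: "'a graph \<Rightarrow> ('a \<times> 'a) set" where "edges G = snd G"

definition wf_graph :: "'a graph \<Rightarrow> bool" where
  "wf_graph G \<longleftrightarrow> edges G \<subseteq> verts G \<times> verts G \<and> sym (edges G)
     \<and> (\<forall>x. (x, x) \<notin> edges G)"

definition subgraph :: "'a graph \<Rightarrow> 'a graph \<Rightarrow> bool" where
  "subgraph F G \<longleftrightarrow> wf_graph F \<and> verts F \<subseteq> verts G \<and> edges F \<subseteq> edges G"

definition connected_on :: "'a graph \<Rightarrow> 'a set \<Rightarrow> bool" where
  "connected_on G S \<longleftrightarrow> S \<noteq> {} \<and> S \<subseteq> verts G \<and>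
     (\<forall>u\<in>S. \<forall>v\<in>S. (u, v) \<in> (edges G \<inter> (S \<times> S))\<^sup>*)"

definition connected_graph :: "'a graph \<Rightarrow> bool" where
  "connected_graph G \<longleftrightarrow> connected_on G (verts G)"

definition ray :: "'a graph \<Rightarrow> (nat \<Rightarrow> 'a) \<Rightarrow> bool" where
  "ray G r \<longleftrightarrow> inj r \<and> (\<forall>i. r i \<in> verts G) \<and> (\<forall>i. (r i, r (Suc i)) \<in> edges G)"

definition has_tail_in :: "(nat \<Rightarrow> 'a) \<Rightarrow> 'a set \<Rightarrow> bool" where
  "has_tail_in r S \<longleftrightarrow> (\<exists>n. \<forall>i\<ge>n. r i \<in> S)"

definition component_of :: "'a graph \<Rightarrow> 'a set \<Rightarrow> 'a \<Rightarrow> 'a set" where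
  "component_of G X v = {u. (v, u) \<in> (edges G \<inter> ((verts G - X) \<times> (verts G - X)))\<^sup>*}"

definition components_minus :: "'a graph \<Rightarrow> 'a set \<Rightarrow> 'a set set" where
  "components_minus G X = component_of G X ` (verts G - X)"

definition rays_equiv :: "'a graph \<Rightarrow> (nat \<Rightarrow> 'a) \<Rightarrow> (nat \<Rightarrow> 'a) \<Rightarrow> bool" where
  "rays_equiv G r s \<longleftrightarrow> (\<forall>X. finite X \<longrightarrow>
     (\<exists>C \<in> components_minus G X. has_tail_in r C \<and> has_tail_in s C))"

definition is_end :: "'a graph \<Rightarrow> (nat \<Rightarrow> 'a) set \<Rightarrow> bool" where
  "is_end G \<omega> \<longleftrightarrow> (\<exists>r. ray G r \<and> \<omega> = {s. ray G s \<and> rays_equiv G r s})"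

definition separation :: "'a graph \<Rightarrow> 'a set \<Rightarrow> 'a set \<Rightarrow> bool" where
  "separation G A B \<longleftrightarrow> A \<union> B = verts G \<and>
     (\<forall>x y. (x, y) \<in> edges G \<longrightarrow> \<not> (x \<in> A - B \<and> y \<in> B - A))"

definition distinguishes :: "'a set \<Rightarrow> 'a set \<Rightarrow> (nat \<Rightarrow> 'a) set \<Rightarrow> (nat \<Rightarrow> 'a) set \<Rightarrow> bool" where
  "distinguishes A B \<omega> \<omega>' \<longleftrightarrow>
     ((\<forall>r\<in>\<omega>. has_tail_in r A) \<and> (\<forall>r\<in>\<omega>'. has_tail_in r B)) \<or>
     ((\<forall>r\<in>\<omega>. has_tail_in r B) \<and> (\<forall>r\<in>\<omega>'. has_tail_in r A))"

definition accessible :: "'a graph \<Rightarrow> bool" where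
  "accessible G \<longleftrightarrow> (\<exists>K::nat. \<forall>\<omega> \<omega>'. is_end G \<omega> \<longrightarrow> is_end G \<omega>' \<longrightarrow> \<omega> \<noteq> \<omega>' \<longrightarrow>
     (\<exists>A B. separation G A B \<and> finite (A \<inter> B) \<and> card (A \<inter> B) \<le> K \<and>
            distinguishes A B \<omega> \<omega>'))"

text \<open>H-decompositions: P h is the part G_h for h a vertex of H.\<close>
definition Hv :: "'b graph \<Rightarrow> ('b \<Rightarrow> 'a graph) \<Rightarrow> 'a \<Rightarrow> 'b set" where
  "Hv H P v = {h \<in> verts H. v \<in> verts (P h)}"

definition decomposition :: "'a graph \<Rightarrow> 'b graph \<Rightarrow> ('b \<Rightarrow> 'a graph) \<Rightarrow> bool" where
  "decomposition G H P \<longleftrightarrow>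
     (\<forall>h\<in>verts H. subgraph (P h) G) \<and>
     verts G = (\<Union>h\<in>verts H. verts (P h)) \<and>
     edges G = (\<Union>h\<in>verts H. edges (P h)) \<and>
     (\<forall>v\<in>verts G. connected_on H (Hv H P v))"

definition point_finite :: "'a graph \<Rightarrow> 'b graph \<Rightarrow> ('b \<Rightarrow> 'a graph) \<Rightarrow> bool" where
  "point_finite G H P \<longleftrightarrow> (\<forall>v\<in>verts G. finite (Hv H P v))"

definition honest :: "'b graph \<Rightarrow> ('b \<Rightarrow> 'a graph) \<Rightarrow> bool" where
  "honest H P \<longleftrightarrow> (\<forall>h h'. (h, h') \<in> edges H \<longrightarrow> verts (P h) \<inter> verts (P h') \<noteq> {})"

end

theory Submission
  imports Defs
begin

(* Both parts are instances of one transfer principle for a relation Q between graphs S and T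
   whose fibres are finite and connected, of bounded size over the vertices of S, and which
   witnesses every edge of S and of T: if S is accessible, so is T.  By Koenig's lemma in the
   locally finite graph S, every ray r of T is shadowed by a ray of S living in the fibres of
   the r i; equivalent shadows force equivalent rays, so distinct ends of T have shadows in
   distinct ends of S.  A separation (A, B) of S of order k distinguishing those pushes forward
   to the separation of T formed by the fibres over A and over B: its separator lies in the
   fibres over A \<inter> B, so it has order at most k N.  It distinguishes the two ends because the
   S-fibres of the r i are connected and consecutive ones meet, so once one of them beyond the
   separator meets A - B (as the shadow's tail does), all later ones lie inside A - B.
   Part (i) takes S = H and T = G, part (ii) takes S = G and T = H. *)

section \<open>Walks inside a vertex set\<close>

abbreviation reach_within :: "'a graph \<Rightarrow> 'a set \<Rightarrow> ('a \<times> 'a) set" where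
  "reach_within G D \<equiv> (edges G \<inter> D \<times> D)\<^sup>*"

lemma wf_graph_edgeD:
  assumes "wf_graph G" "(x, y) \<in> edges G"
  shows "x \<in> verts G" "y \<in> verts G"
  using assms by (auto simp: wf_graph_def)

lemma reach_within_sym:
  assumes "wf_graph G" "(x, y) \<in> reach_within G D"
  shows "(y, x) \<in> reach_within G D"
proof -
  have "sym (edges G \<inter> D \<times> D)"
    using assms(1) unfolding wf_graph_def sym_def by blast
  then have "sym (reach_within G D)"
    by (rule sym_rtrancl)
  then show ?thesis
    using assms(2) by (rule symD)
qed

lemma reach_within_closed: "(x, y) \<in> reach_within G D \<Longrightarrow> x \<in> D \<Longrightarrow> y \<in> D"
  by (induction rule: rtrancl_induct) auto

lemma reach_within_mono: "D \<subseteq> D' \<Longrightarrow> reach_within G D \<subseteq> reach_within G D'"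
  by (intro rtrancl_mono) blast

lemma separation_swap: "wf_graph G \<Longrightarrow> separation G A B \<Longrightarrow> separation G B A"
  unfolding separation_def wf_graph_def sym_def by blast

lemma reach_within_separation:
  assumes "wf_graph G" "separation G A B" "(x, y) \<in> reach_within G D"
    and "x \<in> A - B" "D \<inter> (A \<inter> B) = {}"
  shows "y \<in> A - B"
  using assms(3,4)
proof (induction rule: rtrancl_induct)
  case (step y z)
  then have yz: "(y, z) \<in> edges G" "z \<in> D" "y \<in> A - B" by auto
  have "z \<in> A \<union> B"
    using wf_graph_edgeD(2)[OF assms(1) yz(1)] assms(2) by (simp add: separation_def)
  moreover have "z \<notin> B - A"
    using assms(2) yz(1,3) unfolding separation_def by blast
  ultimately show ?case
    using yz(2) assms(5) by blast
qed

lemma reach_within_component_of: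
  assumes "wf_graph G" "x \<in> component_of G X v" "y \<in> component_of G X v"
  shows "(x, y) \<in> reach_within G (verts G - X)"
proof -
  have "(v, x) \<in> reach_within G (verts G - X)" "(v, y) \<in> reach_within G (verts G - X)"
    using assms(2,3) unfolding component_of_def by auto
  then show ?thesis
    using reach_within_sym[OF assms(1)] rtrancl_trans by metis
qed

lemma component_of_eq:
  assumes "wf_graph G" "u \<in> component_of G X v" "u \<in> component_of G X v'"
  shows "component_of G X v = component_of G X v'"
proof -
  let ?R = "reach_within G (verts G - X)"
  have "(v, u) \<in> ?R" "(v', u) \<in> ?R"
    using assms(2,3) unfolding component_of_def by auto
  then have "(v, v') \<in> ?R" "(v', v) \<in> ?R"
    using reach_within_sym[OF assms(1)] rtrancl_trans by metis+
  then show ?thesis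
    unfolding component_of_def using rtrancl_trans by fast
qed

section \<open>Rays and ends\<close>

lemma has_tail_in_iff_eventually: "has_tail_in r S \<longleftrightarrow> (\<forall>\<^sub>F i in sequentially. r i \<in> S)"
  by (simp add: has_tail_in_def eventually_sequentially)

lemma inj_eventually_notin:
  assumes "inj r" "finite X"
  shows "\<forall>\<^sub>F i in sequentially. r i \<notin> X"
proof -
  have "finite {i. r i \<in> X}"
    using finite_vimageI[OF assms(2,1)] unfolding vimage_def .
  then show ?thesis
    unfolding cofinite_eq_sequentially[symmetric] eventually_cofinite by simp
qed

lemma ray_reach_within:
  assumes "ray G r" "\<forall>k\<ge>i. r k \<notin> X" "i \<le> k"
  shows "(r i, r k) \<in> reach_within G (verts G - X)"
  using assms(3)
proof (induction rule: dec_induct)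
  case (step k)
  then have "(r k, r (Suc k)) \<in> edges G \<inter> (verts G - X) \<times> (verts G - X)"
    using assms(1,2) unfolding ray_def by auto
  with step.IH show ?case
    by (rule rtrancl_into_rtrancl)
qed simp

lemma ray_tail_in_component:
  assumes "ray G r" "\<forall>k\<ge>i. r k \<notin> X" "(v, r i) \<in> reach_within G (verts G - X)"
  shows "has_tail_in r (component_of G X v)"
proof -
  have "\<forall>k\<ge>i. (v, r k) \<in> reach_within G (verts G - X)"
    using assms(3) ray_reach_within[OF assms(1,2)] by (blast intro: rtrancl_trans)
  then show ?thesis
    unfolding has_tail_in_def component_of_def by blast
qed

lemma rays_equiv_refl:
  assumes "ray G r"
  shows "rays_equiv G r r"
  unfolding rays_equiv_def
proof (intro allI impI)
  fix X :: "'a set"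
  assume "finite X"
  then obtain i where i: "\<forall>k\<ge>i. r k \<notin> X"
    using inj_eventually_notin[of r X] assms unfolding ray_def eventually_sequentially by blast
  then have "component_of G X (r i) \<in> components_minus G X"
    using assms unfolding ray_def components_minus_def by auto
  with ray_tail_in_component[OF assms i rtrancl_refl]
  show "\<exists>C\<in>components_minus G X. has_tail_in r C \<and> has_tail_in r C"
    by blast
qed

lemma rays_equiv_sym: "rays_equiv G r s \<Longrightarrow> rays_equiv G s r"
  unfolding rays_equiv_def by blast

lemma rays_equiv_trans:
  assumes "wf_graph G" "rays_equiv G r s" "rays_equiv G s t"
  shows "rays_equiv G r t"
  unfolding rays_equiv_def
proof (intro allI impI)
  fix X :: "'a set"
  assume "finite X"
  then obtain C C' where C: "C \<in> components_minus G X" "has_tail_in r C" "has_tail_in s C"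
    and C': "C' \<in> components_minus G X" "has_tail_in s C'" "has_tail_in t C'"
    using assms(2,3) unfolding rays_equiv_def by meson
  have "\<forall>\<^sub>F i in sequentially. s i \<in> C \<inter> C'"
    using C(3) C'(2) unfolding has_tail_in_iff_eventually by (auto elim: eventually_elim2)
  then obtain u where "u \<in> C" "u \<in> C'"
    using eventually_happens'[OF sequentially_bot] by blast
  then have "C = C'"
    using C(1) C'(1) component_of_eq[OF assms(1)] unfolding components_minus_def by blast
  with C C' show "\<exists>C\<in>components_minus G X. has_tail_in r C \<and> has_tail_in t C"
    by blast
qed

definition end_of :: "'a graph \<Rightarrow> (nat \<Rightarrow> 'a) \<Rightarrow> (nat \<Rightarrow> 'a) set" where
  "end_of G r = {s. ray G s \<and> rays_equiv G r s}"

lemma is_end_iff: "is_end G \<omega> \<longleftrightarrow> (\<exists>r. ray G r \<and> \<omega> = end_of G r)"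
  by (simp add: is_end_def end_of_def)

lemma end_of_eq_iff:
  assumes "wf_graph G" "ray G r" "ray G r'"
  shows "end_of G r = end_of G r' \<longleftrightarrow> rays_equiv G r r'"
proof
  assume "end_of G r = end_of G r'"
  moreover have "r' \<in> end_of G r'"
    using assms(3) rays_equiv_refl unfolding end_of_def by blast
  ultimately show "rays_equiv G r r'"
    unfolding end_of_def by blast
next
  assume "rays_equiv G r r'"
  then show "end_of G r = end_of G r'"
    unfolding end_of_def using rays_equiv_sym rays_equiv_trans[OF assms(1)] by blast
qed

lemma end_of_has_tail_in_iff:
  assumes wf: "wf_graph G" and sep: "separation G A B" and fin: "finite (A \<inter> B)"
    and r: "ray G r"
  shows "(\<forall>s\<in>end_of G r. has_tail_in s A) \<longleftrightarrow> has_tail_in r A"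
proof
  show "has_tail_in r A" if "\<forall>s\<in>end_of G r. has_tail_in s A"
    using that r rays_equiv_refl unfolding end_of_def by blast
next
  assume tail: "has_tail_in r A"
  show "\<forall>s\<in>end_of G r. has_tail_in s A"
  proof
    fix s
    assume "s \<in> end_of G r"
    then obtain C where C: "C \<in> components_minus G (A \<inter> B)" "has_tail_in r C" "has_tail_in s C"
      using fin unfolding end_of_def rays_equiv_def by blast
    have "\<forall>\<^sub>F i in sequentially. (r i \<in> A \<and> r i \<in> C) \<and> r i \<notin> A \<inter> B"
      using tail C(2) inj_eventually_notin[OF _ fin] r
      unfolding has_tail_in_iff_eventually ray_def by (intro eventually_conj) auto
    then obtain x where x: "x \<in> A - B" "x \<in> C"
      using eventually_happens'[OF sequentially_bot] by blast
    have "C \<subseteq> A"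
    proof
      fix u
      assume "u \<in> C"
      then have "(x, u) \<in> reach_within G (verts G - A \<inter> B)"
        using C(1) x(2) reach_within_component_of[OF wf] unfolding components_minus_def by blast
      then show "u \<in> A"
        using reach_within_separation[OF wf sep _ x(1)] by blast
    qed
    with C(3) show "has_tail_in s A"
      unfolding has_tail_in_def by blast
  qed
qed

lemma distinguishes_end_of_iff:
  assumes "wf_graph G" "separation G A B" "finite (A \<inter> B)" "ray G r" "ray G r'"
  shows "distinguishes A B (end_of G r) (end_of G r') \<longleftrightarrow>
    (has_tail_in r A \<and> has_tail_in r' B) \<or> (has_tail_in r B \<and> has_tail_in r' A)"
proof -
  have "separation G B A" "finite (B \<inter> A)"
    using separation_swap[OF assms(1,2)] assms(3) by (simp_all add: Int_commute)
  then show ?thesis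
    unfolding distinguishes_def using end_of_has_tail_in_iff assms by metis
qed

lemma connected_on_UN_chain:
  assumes wf: "wf_graph G" and conn: "\<And>i. connected_on G (C i)"
    and meet: "\<And>i. C i \<inter> C (Suc i) \<noteq> {}"
  shows "connected_on G (\<Union>i. C i)"
proof -
  let ?U = "\<Union>i. C i"
  obtain x where x: "x \<in> C 0"
    using conn[of 0] unfolding connected_on_def by blast
  have "\<forall>y\<in>C i. (x, y) \<in> reach_within G ?U" for i
  proof (induction i)
    case 0
    have "reach_within G (C 0) \<subseteq> reach_within G ?U"
      by (rule reach_within_mono) blast
    with x conn[of 0] show ?case
      unfolding connected_on_def by blast
  next
    case (Suc i)
    obtain c where c: "c \<in> C i" "c \<in> C (Suc i)"
      using meet[of i] by blast
    have "reach_within G (C (Suc i)) \<subseteq> reach_within G ?U"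
      by (rule reach_within_mono) blast
    with c(2) conn[of "Suc i"] have "\<forall>y\<in>C (Suc i). (c, y) \<in> reach_within G ?U"
      unfolding connected_on_def by blast
    with Suc.IH c(1) show ?case
      by (blast intro: rtrancl_trans)
  qed
  then have "(u, v) \<in> reach_within G ?U" if "u \<in> ?U" "v \<in> ?U" for u v
    using that reach_within_sym[OF wf] by (blast intro: rtrancl_trans)
  moreover have "?U \<subseteq> verts G"
    using conn unfolding connected_on_def by blast
  ultimately show ?thesis
    unfolding connected_on_def using x by blast
qed

section \<open>K\<ouml>nig's lemma\<close>

definition locally_finite :: "'a graph \<Rightarrow> bool" where
  "locally_finite G \<longleftrightarrow> (\<forall>v\<in>verts G. finite {u. (v, u) \<in> edges G})"

lemma reach_within_via_neighbour:
  assumes "(w, u) \<in> reach_within G C" "u \<noteq> w"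
  shows "\<exists>w'. (w, w') \<in> edges G \<and> w' \<in> C - {w} \<and> (w', u) \<in> reach_within G (C - {w})"
proof -
  have "u = w \<or> (\<exists>w'. (w, w') \<in> edges G \<and> w' \<in> C - {w} \<and> (w', u) \<in> reach_within G (C - {w}))"
    using assms(1)
  proof (induction rule: rtrancl_induct)
    case (step y z)
    show ?case
    proof (cases "z = w \<or> y = w")
      case True
      with step.hyps(2) show ?thesis by blast
    next
      case False
      with step.IH obtain w' where "(w, w') \<in> edges G" "w' \<in> C - {w}"
          "(w', y) \<in> reach_within G (C - {w})"
        by blast
      moreover have "(y, z) \<in> edges G \<inter> (C - {w}) \<times> (C - {w})"
        using step.hyps(2) False by blast
      ultimately show ?thesis
        by (blast intro: rtrancl_into_rtrancl)
    qed
  qed simp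
  with assms(2) show ?thesis by blast
qed

lemma reach_within_class_connected:
  assumes "wf_graph G" "D \<subseteq> verts G" "x \<in> D"
  shows "connected_on G {y. (x, y) \<in> reach_within G D}"
proof -
  define K where "K = {y. (x, y) \<in> reach_within G D}"
  have into_K: "(x, y) \<in> reach_within G K" if "(x, y) \<in> reach_within G D" for y
    using that
  proof (induction rule: rtrancl_induct)
    case (step y z)
    then have "(y, z) \<in> edges G \<inter> K \<times> K"
      unfolding K_def by (blast intro: rtrancl_into_rtrancl)
    with step.IH show ?case
      by (rule rtrancl_into_rtrancl)
  qed simp
  have "K \<subseteq> D"
    using reach_within_closed assms(3) unfolding K_def by fast
  moreover have "(u, v) \<in> reach_within G K" if "u \<in> K" "v \<in> K" for u v
  proof -
    have "(x, u) \<in> reach_within G K" "(x, v) \<in> reach_within G K"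
      using into_K that unfolding K_def by blast+
    then show ?thesis
      using reach_within_sym[OF assms(1)] by (blast intro: rtrancl_trans)
  qed
  moreover have "x \<in> K"
    unfolding K_def by simp
  ultimately show ?thesis
    using assms(2) unfolding connected_on_def K_def[symmetric] by blast
qed

lemma connected_on_infinite_step:
  assumes wf: "wf_graph G" and lf: "locally_finite G"
    and C: "connected_on G C" "infinite C" "w \<in> C"
  shows "\<exists>w' C'. (w, w') \<in> edges G \<and> w' \<in> C' \<and> C' \<subseteq> C - {w} \<and> connected_on G C' \<and> infinite C'"
proof -
  define K where "K w' = {u. (w', u) \<in> reach_within G (C - {w})}" for w'
  let ?N = "{w' \<in> C - {w}. (w, w') \<in> edges G}"
  have "finite ?N"
    using lf C(1,3) unfolding locally_finite_def connected_on_def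
    by (auto intro: finite_subset[of _ "{u. (w, u) \<in> edges G}"])
  moreover have cover: "C - {w} \<subseteq> (\<Union>w'\<in>?N. K w')"
  proof
    fix u
    assume u: "u \<in> C - {w}"
    then have "(w, u) \<in> reach_within G C"
      using C(1,3) unfolding connected_on_def by blast
    with u show "u \<in> (\<Union>w'\<in>?N. K w')"
      using reach_within_via_neighbour unfolding K_def by fast
  qed
  moreover have "infinite (\<Union>w'\<in>?N. K w')"
    using finite_subset[OF cover] C(2) by auto
  ultimately obtain w' where w': "w' \<in> ?N" "infinite (K w')"
    by blast
  have "C - {w} \<subseteq> verts G"
    using C(1) unfolding connected_on_def by blast
  then have "connected_on G (K w')"
    using reach_within_class_connected[OF wf, of _ w'] w'(1) unfolding K_def by blast
  moreover have "K w' \<subseteq> C - {w}"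
    using reach_within_closed[of w' _ G "C - {w}"] w'(1) unfolding K_def by blast
  moreover have "w' \<in> K w'"
    unfolding K_def by simp
  ultimately show ?thesis
    using w' by blast
qed

lemma inj_if_nested:
  assumes mem: "\<And>n. s n \<in> D n" and step: "\<And>n. D (Suc n) \<subseteq> D n - {s n}"
  shows "inj s"
proof (rule linorder_injI)
  fix m n :: nat
  assume "m < n"
  have "D (Suc k) \<subseteq> D k" for k
    using step[of k] by blast
  from lift_Suc_antimono_le[of D, OF this Suc_leI[OF \<open>m < n\<close>]]
  have "D n \<subseteq> D (Suc m)" .
  with step[of m] mem[of n] have "s n \<in> D m - {s m}"
    by (meson subsetD)
  then show "s m \<noteq> s n"
    by (metis DiffD2 singletonI)
qed

lemma konig_ray:
  assumes wf: "wf_graph G" and lf: "locally_finite G"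
    and C: "connected_on G C" "infinite C"
  shows "\<exists>s. ray G s \<and> range s \<subseteq> C"
proof -
  define P where "P n p \<longleftrightarrow> connected_on G (snd p) \<and> infinite (snd p) \<and> fst p \<in> snd p \<and> snd p \<subseteq> C"
    for n :: nat and p :: "'a \<times> 'a set"
  define Q where "Q n p p' \<longleftrightarrow> (fst p, fst p') \<in> edges G \<and> snd p' \<subseteq> snd p - {fst p}"
    for n :: nat and p p' :: "'a \<times> 'a set"
  obtain w where "w \<in> C"
    using C(1) unfolding connected_on_def by blast
  with C have "P 0 (w, C)"
    unfolding P_def by simp
  moreover have "\<exists>p'. P (Suc n) p' \<and> Q n p p'" if p: "P n p" for p n
  proof -
    obtain w' C' where "(fst p, w') \<in> edges G" "w' \<in> C'" "C' \<subseteq> snd p - {fst p}"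
        "connected_on G C'" "infinite C'"
      using connected_on_infinite_step[OF wf lf] p unfolding P_def by blast
    with p have "P (Suc n) (w', C') \<and> Q n p (w', C')"
      unfolding P_def Q_def by auto
    then show ?thesis
      by blast
  qed
  ultimately obtain f where Pf: "\<And>n. P n (f n)" and Qf: "\<And>n. Q n (f n) (f (Suc n))"
    using dependent_nat_choice[of P Q] by blast
  define s where "s n = fst (f n)" for n
  have mem: "s n \<in> snd (f n)" "snd (f n) \<subseteq> C" for n
    using Pf[of n] unfolding P_def s_def by simp_all
  have step: "(s n, s (Suc n)) \<in> edges G" "snd (f (Suc n)) \<subseteq> snd (f n) - {s n}" for n
    using Qf[of n] unfolding Q_def s_def by simp_all
  have "inj s"
    using inj_if_nested[of s "\<lambda>n. snd (f n)"] mem(1) step(2) by blast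
  moreover have "range s \<subseteq> C"
    using mem by blast
  moreover have "C \<subseteq> verts G"
    using C(1) unfolding connected_on_def by simp
  ultimately show ?thesis
    unfolding ray_def using step(1) by blast
qed

section \<open>Transferring accessibility along a correspondence\<close>

locale bounded_correspondence =
  fixes S :: "'s graph" and T :: "'t graph" and Q :: "'s \<Rightarrow> 't \<Rightarrow> bool" and N :: nat
  assumes wf_S: "wf_graph S" and wf_T: "wf_graph T"
    and finite_S_fibre: "\<And>t. t \<in> verts T \<Longrightarrow> finite {a \<in> verts S. Q a t}"
    and connected_S_fibre: "\<And>t. t \<in> verts T \<Longrightarrow> connected_on S {a \<in> verts S. Q a t}"
    and finite_T_fibre: "\<And>a. a \<in> verts S \<Longrightarrow> finite {t \<in> verts T. Q a t}"
    and card_T_fibre: "\<And>a. a \<in> verts S \<Longrightarrow> card {t \<in> verts T. Q a t} \<le> N"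
    and connected_T_fibre: "\<And>a. a \<in> verts S \<Longrightarrow> connected_on T {t \<in> verts T. Q a t}"
    and T_edge_witness: "\<And>t t'. (t, t') \<in> edges T \<Longrightarrow> \<exists>a\<in>verts S. Q a t \<and> Q a t'"
    and S_edge_witness: "\<And>a a'. (a, a') \<in> edges S \<Longrightarrow> \<exists>t\<in>verts T. Q a t \<and> Q a' t"
begin

abbreviation S_fibre :: "'t \<Rightarrow> 's set" where
  "S_fibre t \<equiv> {a \<in> verts S. Q a t}"

abbreviation T_fibre :: "'s \<Rightarrow> 't set" where
  "T_fibre a \<equiv> {t \<in> verts T. Q a t}"

lemma S_fibre_nonempty: "t \<in> verts T \<Longrightarrow> S_fibre t \<noteq> {}"
  using connected_S_fibre unfolding connected_on_def by blast

lemma finite_UN_S_fibre: "finite X \<Longrightarrow> X \<subseteq> verts T \<Longrightarrow> finite (\<Union>t\<in>X. S_fibre t)"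
  using finite_S_fibre by blast

lemma finite_UN_T_fibre: "finite Y \<Longrightarrow> Y \<subseteq> verts S \<Longrightarrow> finite (\<Union>a\<in>Y. T_fibre a)"
  using finite_T_fibre by blast

lemma card_UN_T_fibre_le:
  assumes "finite Y" "Y \<subseteq> verts S"
  shows "card (\<Union>a\<in>Y. T_fibre a) \<le> card Y * N"
proof -
  have "card (\<Union>a\<in>Y. T_fibre a) \<le> (\<Sum>a\<in>Y. card (T_fibre a))"
    using card_UN_le[OF assms(1)] .
  also have "\<dots> \<le> (\<Sum>a\<in>Y. N)"
    using card_T_fibre assms(2) by (intro sum_mono) blast
  finally show ?thesis
    by simp
qed

lemma locally_finite_S: "locally_finite S"
  unfolding locally_finite_def
proof
  fix a
  assume a: "a \<in> verts S"
  have "{a'. (a, a') \<in> edges S} \<subseteq> (\<Union>t\<in>T_fibre a. S_fibre t)"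
  proof
    fix a'
    assume "a' \<in> {a'. (a, a') \<in> edges S}"
    then have "(a, a') \<in> edges S" by simp
    with S_edge_witness wf_graph_edgeD(2)[OF wf_S this]
    show "a' \<in> (\<Union>t\<in>T_fibre a. S_fibre t)"
      by blast
  qed
  moreover have "finite (\<Union>t\<in>T_fibre a. S_fibre t)"
    using finite_UN_S_fibre finite_T_fibre[OF a] by blast
  ultimately show "finite {a'. (a, a') \<in> edges S}"
    by (rule finite_subset)
qed

definition follows :: "(nat \<Rightarrow> 's) \<Rightarrow> (nat \<Rightarrow> 't) \<Rightarrow> bool" where
  "follows s r \<longleftrightarrow> ray S s \<and> (\<forall>j. \<exists>i. Q (s j) (r i))"

lemma follower_exists:
  assumes r: "ray T r"
  shows "\<exists>s. follows s r"
proof -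
  let ?W = "\<Union>i. S_fibre (r i)"
  have rV: "r i \<in> verts T" for i
    using r unfolding ray_def by simp
  have "connected_on S ?W"
  proof (rule connected_on_UN_chain[OF wf_S])
    show "connected_on S (S_fibre (r i))" for i
      using connected_S_fibre[OF rV] .
    show "S_fibre (r i) \<inter> S_fibre (r (Suc i)) \<noteq> {}" for i
      using T_edge_witness[of "r i" "r (Suc i)"] r unfolding ray_def by blast
  qed
  moreover have "infinite ?W"
  proof
    assume "finite ?W"
    then have "finite (\<Union>a\<in>?W. T_fibre a)"
      using finite_UN_T_fibre by blast
    moreover have "range r \<subseteq> (\<Union>a\<in>?W. T_fibre a)"
    proof
      fix t
      assume "t \<in> range r"
      then obtain i where "t = r i" by blast
      moreover obtain a where "a \<in> S_fibre (r i)"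
        using S_fibre_nonempty[OF rV] by blast
      ultimately show "t \<in> (\<Union>a\<in>?W. T_fibre a)"
        using rV by blast
    qed
    ultimately have "finite (range r)"
      by (rule finite_subset[rotated])
    then have "finite (UNIV :: nat set)"
      using finite_imageD r unfolding ray_def by blast
    then show False
      by simp
  qed
  ultimately obtain s where "ray S s" "range s \<subseteq> ?W"
    using konig_ray[OF wf_S locally_finite_S] by blast
  then show ?thesis
    unfolding follows_def by blast
qed

lemma eventually_related_beyond:
  assumes "ray T r" "ray S s"
  shows "\<forall>\<^sub>F j in sequentially. \<forall>i. Q (s j) (r i) \<longrightarrow> n \<le> i"
proof -
  have "finite (\<Union>t\<in>r ` {..<n}. S_fibre t)"
    using assms(1) unfolding ray_def by (intro finite_UN_S_fibre) auto
  then have "\<forall>\<^sub>F j in sequentially. s j \<notin> (\<Union>t\<in>r ` {..<n}. S_fibre t)"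
    using inj_eventually_notin assms(2) unfolding ray_def by blast
  then show ?thesis
  proof (rule eventually_mono)
    fix j
    assume "s j \<notin> (\<Union>t\<in>r ` {..<n}. S_fibre t)"
    moreover have "s j \<in> verts S"
      using assms(2) unfolding ray_def by simp
    ultimately show "\<forall>i. Q (s j) (r i) \<longrightarrow> n \<le> i"
      using not_le by blast
  qed
qed

lemma S_fibres_stay_on_side:
  assumes r: "ray T r" and sep: "separation S A B"
    and avoid: "\<And>k. i \<le> k \<Longrightarrow> S_fibre (r k) \<inter> (A \<inter> B) = {}"
    and start: "a \<in> S_fibre (r i)" "a \<in> A - B"
  shows "\<forall>k\<ge>i. S_fibre (r k) \<subseteq> A - B"
proof -
  have rV: "r k \<in> verts T" for k
    using r unfolding ray_def by simp
  have inside: "S_fibre (r k) \<subseteq> A - B" if "i \<le> k" "c \<in> S_fibre (r k)" "c \<in> A - B" for k c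
  proof
    fix b
    assume "b \<in> S_fibre (r k)"
    with that(2) have "(c, b) \<in> reach_within S (S_fibre (r k))"
      using connected_S_fibre[OF rV] unfolding connected_on_def by blast
    from reach_within_separation[OF wf_S sep this that(3) avoid[OF that(1)]]
    show "b \<in> A - B" .
  qed
  have "S_fibre (r k) \<subseteq> A - B" if "i \<le> k" for k
    using that
  proof (induction rule: dec_induct)
    case base
    show ?case
      using inside[OF order_refl start] .
  next
    case (step k)
    obtain c where "c \<in> S_fibre (r k)" "c \<in> S_fibre (r (Suc k))"
      using T_edge_witness[of "r k" "r (Suc k)"] r unfolding ray_def by blast
    with step.IH inside[of "Suc k" c] step.hyps(1) show ?case
      by auto
  qed
  then show ?thesis
    by blast
qed

lemma follows_has_tail_in:
  assumes r: "ray T r" and fol: "follows s r"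
    and sep: "separation S A B" and fin: "finite (A \<inter> B)" and tail: "has_tail_in s A"
  shows "has_tail_in r (\<Union>a\<in>A. T_fibre a)"
proof -
  have s: "ray S s"
    using fol unfolding follows_def by simp
  have rV: "r i \<in> verts T" for i
    using r unfolding ray_def by simp
  have "A \<inter> B \<subseteq> verts S"
    using sep unfolding separation_def by blast
  with fin have "\<forall>\<^sub>F i in sequentially. r i \<notin> (\<Union>c\<in>A \<inter> B. T_fibre c)"
    using finite_UN_T_fibre inj_eventually_notin r unfolding ray_def by blast
  then obtain i0 where i0: "\<And>i. i0 \<le> i \<Longrightarrow> S_fibre (r i) \<inter> (A \<inter> B) = {}"
    unfolding eventually_sequentially using rV by blast
  have "\<forall>\<^sub>F j in sequentially. (s j \<in> A \<and> s j \<notin> A \<inter> B) \<and> (\<forall>i. Q (s j) (r i) \<longrightarrow> i0 \<le> i)"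
    using tail inj_eventually_notin[OF _ fin] eventually_related_beyond[OF r s] s
    unfolding has_tail_in_iff_eventually ray_def by (intro eventually_conj) auto
  then obtain j where j: "s j \<in> A - B" "\<forall>i. Q (s j) (r i) \<longrightarrow> i0 \<le> i"
    using eventually_happens'[OF sequentially_bot] by blast
  obtain i where i: "Q (s j) (r i)"
    using fol unfolding follows_def by blast
  with j(2) have "i0 \<le> i"
    by blast
  have "S_fibre (r k) \<inter> (A \<inter> B) = {}" if "i \<le> k" for k
    using i0[OF order_trans[OF \<open>i0 \<le> i\<close> that]] .
  moreover have "s j \<in> S_fibre (r i)"
    using s i unfolding ray_def by simp
  ultimately have "\<forall>k\<ge>i. S_fibre (r k) \<subseteq> A - B"
    by (rule S_fibres_stay_on_side[OF r sep _ _ j(1)])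
  then have "r k \<in> (\<Union>a\<in>A. T_fibre a)" if "i \<le> k" for k
  proof -
    obtain a where "a \<in> S_fibre (r k)"
      using S_fibre_nonempty[OF rV] by blast
    with \<open>\<forall>k\<ge>i. S_fibre (r k) \<subseteq> A - B\<close> that rV show ?thesis
      by blast
  qed
  then show ?thesis
    unfolding has_tail_in_def by blast
qed

lemma reach_within_lift:
  assumes "(a, b) \<in> reach_within S (verts S - Y)" and Y: "Y = {c \<in> verts S. T_fibre c \<inter> X \<noteq> {}}"
    and "a \<in> verts S - Y" "t \<in> T_fibre a" "t' \<in> T_fibre b"
  shows "(t, t') \<in> reach_within T (verts T - X)"
proof -
  have fibre: "(u, u') \<in> reach_within T (verts T - X)"
    if "c \<in> verts S - Y" "u \<in> T_fibre c" "u' \<in> T_fibre c" for c u u'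
  proof -
    have "(u, u') \<in> reach_within T (T_fibre c)"
      using connected_T_fibre that unfolding connected_on_def by blast
    moreover have "T_fibre c \<subseteq> verts T - X"
      using that(1) Y by blast
    ultimately show ?thesis
      using reach_within_mono by blast
  qed
  have "\<forall>t'\<in>T_fibre b. (t, t') \<in> reach_within T (verts T - X)"
    using assms(1)
  proof (induction rule: rtrancl_induct)
    case base
    show ?case
      using fibre[OF assms(3,4)] by blast
  next
    case (step y z)
    then have "(y, z) \<in> edges S" "z \<in> verts S - Y"
      by auto
    then obtain u where "u \<in> T_fibre y" "u \<in> T_fibre z"
      using S_edge_witness by blast
    with step.IH fibre[OF \<open>z \<in> verts S - Y\<close> \<open>u \<in> T_fibre z\<close>] show ?case
      by (blast intro: rtrancl_trans)
  qed
  with assms(5) show ?thesis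
    by blast
qed

lemma follows_enters_late:
  assumes r: "ray T r" and fol: "follows s r" and tail: "has_tail_in s C" and X: "finite X"
  shows "\<exists>j i. s j \<in> C \<and> Q (s j) (r i) \<and> r i \<in> verts T - X \<and> (\<forall>k\<ge>i. r k \<notin> X)"
proof -
  obtain i0 where i0: "\<forall>k\<ge>i0. r k \<notin> X"
    using inj_eventually_notin[OF _ X] r unfolding ray_def eventually_sequentially by blast
  have "ray S s"
    using fol unfolding follows_def by simp
  then have "\<forall>\<^sub>F j in sequentially. s j \<in> C \<and> (\<forall>i. Q (s j) (r i) \<longrightarrow> i0 \<le> i)"
    using tail eventually_related_beyond[OF r] unfolding has_tail_in_iff_eventually
    by (intro eventually_conj)
  then obtain j where j: "s j \<in> C" "\<forall>i. Q (s j) (r i) \<longrightarrow> i0 \<le> i"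
    using eventually_happens'[OF sequentially_bot] by blast
  obtain i where "Q (s j) (r i)"
    using fol unfolding follows_def by blast
  moreover have "r i \<in> verts T"
    using r unfolding ray_def by simp
  ultimately show ?thesis
    using i0 j by (meson DiffI order_trans)
qed

lemma follows_rays_equiv:
  assumes r: "ray T r" "follows s r" and r': "ray T r'" "follows s' r'"
    and equiv: "rays_equiv S s s'"
  shows "rays_equiv T r r'"
  unfolding rays_equiv_def
proof (intro allI impI)
  fix X :: "'t set"
  assume X: "finite X"
  define Y where "Y = {c \<in> verts S. T_fibre c \<inter> X \<noteq> {}}"
  have "Y \<subseteq> (\<Union>t\<in>X \<inter> verts T. S_fibre t)"
    unfolding Y_def by blast
  then have "finite Y"
    using finite_UN_S_fibre[of "X \<inter> verts T"] X finite_subset by blast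
  then obtain C where C: "C \<in> components_minus S Y" "has_tail_in s C" "has_tail_in s' C"
    using equiv unfolding rays_equiv_def by blast
  obtain j i where j: "s j \<in> C" "Q (s j) (r i)" "r i \<in> verts T - X" "\<forall>k\<ge>i. r k \<notin> X"
    using follows_enters_late[OF r C(2) X] by blast
  obtain j' i' where j': "s' j' \<in> C" "Q (s' j') (r' i')" "r' i' \<in> verts T - X" "\<forall>k\<ge>i'. r' k \<notin> X"
    using follows_enters_late[OF r' C(3) X] by blast
  obtain v where v: "v \<in> verts S - Y" "C = component_of S Y v"
    using C(1) unfolding components_minus_def by blast
  have "(v, s j) \<in> reach_within S (verts S - Y)"
    using j(1) v(2) unfolding component_of_def by blast
  from this v(1) have "s j \<in> verts S - Y"
    by (rule reach_within_closed)
  have "(s j, s' j') \<in> reach_within S (verts S - Y)"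
    using j(1) j'(1) v(2) reach_within_component_of[OF wf_S] by blast
  have link: "(r i, r' i') \<in> reach_within T (verts T - X)"
    using reach_within_lift[OF \<open>(s j, s' j') \<in> _\<close> Y_def \<open>s j \<in> verts S - Y\<close>] j(2,3) j'(2,3)
    by blast
  have "has_tail_in r (component_of T X (r i))"
    using ray_tail_in_component[OF r(1) j(4) rtrancl_refl] .
  moreover have "has_tail_in r' (component_of T X (r i))"
    using ray_tail_in_component[OF r'(1) j'(4) link] .
  moreover have "component_of T X (r i) \<in> components_minus T X"
    using j(3) unfolding components_minus_def by blast
  ultimately show "\<exists>D\<in>components_minus T X. has_tail_in r D \<and> has_tail_in r' D"
    by blast
qed

lemma separation_T_fibres:
  assumes sep: "separation S A B"
  shows "separation T (\<Union>a\<in>A. T_fibre a) (\<Union>b\<in>B. T_fibre b)"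
  unfolding separation_def
proof (intro conjI allI impI notI)
  have "verts T \<subseteq> (\<Union>a\<in>A \<union> B. T_fibre a)"
  proof
    fix t
    assume t: "t \<in> verts T"
    then obtain a where "a \<in> S_fibre t"
      using S_fibre_nonempty by blast
    with t sep show "t \<in> (\<Union>a\<in>A \<union> B. T_fibre a)"
      unfolding separation_def by blast
  qed
  then show "(\<Union>a\<in>A. T_fibre a) \<union> (\<Union>b\<in>B. T_fibre b) = verts T"
    by blast
next
  fix x y
  assume xy: "(x, y) \<in> edges T"
    and "x \<in> (\<Union>a\<in>A. T_fibre a) - (\<Union>b\<in>B. T_fibre b) \<and> y \<in> (\<Union>b\<in>B. T_fibre b) - (\<Union>a\<in>A. T_fibre a)"
  moreover obtain a where "a \<in> verts S" "Q a x" "Q a y"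
    using T_edge_witness[OF xy] by blast
  moreover have "x \<in> verts T" "y \<in> verts T"
    using wf_graph_edgeD[OF wf_T xy] by simp_all
  moreover have "A \<union> B = verts S"
    using sep unfolding separation_def by simp
  ultimately show False
    by blast
qed

lemma T_fibres_Int_subset:
  assumes sep: "separation S A B"
  shows "(\<Union>a\<in>A. T_fibre a) \<inter> (\<Union>b\<in>B. T_fibre b) \<subseteq> (\<Union>c\<in>A \<inter> B. T_fibre c)"
proof
  fix t
  assume "t \<in> (\<Union>a\<in>A. T_fibre a) \<inter> (\<Union>b\<in>B. T_fibre b)"
  then obtain a b where ab: "a \<in> A" "b \<in> B" "a \<in> S_fibre t" "b \<in> S_fibre t" "t \<in> verts T"
    using sep unfolding separation_def by blast
  show "t \<in> (\<Union>c\<in>A \<inter> B. T_fibre c)"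
  proof (rule ccontr)
    assume "t \<notin> (\<Union>c\<in>A \<inter> B. T_fibre c)"
    with ab(5) have disjoint: "S_fibre t \<inter> (A \<inter> B) = {}"
      by blast
    with ab(1,3) have "a \<in> A - B"
      by blast
    moreover have "(a, b) \<in> reach_within S (S_fibre t)"
      using connected_S_fibre[OF ab(5)] ab(3,4) unfolding connected_on_def by blast
    ultimately have "b \<in> A - B"
      using reach_within_separation[OF wf_S sep _ _ disjoint] by blast
    with ab(2) show False
      by blast
  qed
qed

lemma order_of_T_fibres_separation:
  assumes sep: "separation S A B" and "finite (A \<inter> B)" "card (A \<inter> B) \<le> K"
  shows "finite ((\<Union>a\<in>A. T_fibre a) \<inter> (\<Union>b\<in>B. T_fibre b))"
    and "card ((\<Union>a\<in>A. T_fibre a) \<inter> (\<Union>b\<in>B. T_fibre b)) \<le> K * N"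
proof -
  have "A \<inter> B \<subseteq> verts S"
    using sep unfolding separation_def by blast
  then have U: "finite (\<Union>c\<in>A \<inter> B. T_fibre c)"
      "card (\<Union>c\<in>A \<inter> B. T_fibre c) \<le> card (A \<inter> B) * N"
    using finite_UN_T_fibre card_UN_T_fibre_le assms(2) by simp_all
  note sub = T_fibres_Int_subset[OF sep]
  show "finite ((\<Union>a\<in>A. T_fibre a) \<inter> (\<Union>b\<in>B. T_fibre b))"
    using finite_subset[OF sub U(1)] .
  have "card ((\<Union>a\<in>A. T_fibre a) \<inter> (\<Union>b\<in>B. T_fibre b)) \<le> card (A \<inter> B) * N"
    using card_mono[OF U(1) sub] U(2) by linarith
  also have "\<dots> \<le> K * N"
    using assms(3) by simp
  finally show "card ((\<Union>a\<in>A. T_fibre a) \<inter> (\<Union>b\<in>B. T_fibre b)) \<le> K * N" .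
qed

lemma distinguishes_T_fibres:
  assumes r: "ray T r" "follows s r" and r': "ray T r'" "follows s' r'"
    and sep: "separation S A B" and fin: "finite (A \<inter> B)"
    and dist: "distinguishes A B (end_of S s) (end_of S s')"
  shows "distinguishes (\<Union>a\<in>A. T_fibre a) (\<Union>b\<in>B. T_fibre b) (end_of T r) (end_of T r')"
proof -
  have "ray S s" "ray S s'"
    using r(2) r'(2) unfolding follows_def by simp_all
  then have "(has_tail_in s A \<and> has_tail_in s' B) \<or> (has_tail_in s B \<and> has_tail_in s' A)"
    using dist distinguishes_end_of_iff[OF wf_S sep fin] by blast
  moreover have "separation S B A" "finite (B \<inter> A)"
    using separation_swap[OF wf_S sep] fin by (simp_all add: Int_commute)
  ultimately have "(has_tail_in r (\<Union>a\<in>A. T_fibre a) \<and> has_tail_in r' (\<Union>b\<in>B. T_fibre b))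
      \<or> (has_tail_in r (\<Union>b\<in>B. T_fibre b) \<and> has_tail_in r' (\<Union>a\<in>A. T_fibre a))"
    using follows_has_tail_in[OF _ _ sep fin] follows_has_tail_in[of _ _ B A] r r' by blast
  moreover have "finite ((\<Union>a\<in>A. T_fibre a) \<inter> (\<Union>b\<in>B. T_fibre b))"
    using order_of_T_fibres_separation(1)[OF sep fin order_refl] .
  ultimately show ?thesis
    using distinguishes_end_of_iff[OF wf_T separation_T_fibres[OF sep]] r(1) r'(1) by blast
qed

theorem accessible_transfer:
  assumes "accessible S"
  shows "accessible T"
proof -
  obtain K where K: "\<forall>\<omega> \<omega>'. is_end S \<omega> \<longrightarrow> is_end S \<omega>' \<longrightarrow> \<omega> \<noteq> \<omega>' \<longrightarrow>
      (\<exists>A B. separation S A B \<and> finite (A \<inter> B) \<and> card (A \<inter> B) \<le> K \<and> distinguishes A B \<omega> \<omega>')"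
    using assms unfolding accessible_def by blast
  show ?thesis
    unfolding accessible_def
  proof (intro exI[of _ "K * N"] allI impI)
    fix \<omega> \<omega>'
    assume "is_end T \<omega>" "is_end T \<omega>'" "\<omega> \<noteq> \<omega>'"
    then obtain r r' where r: "ray T r" "ray T r'" "\<omega> = end_of T r" "\<omega>' = end_of T r'"
      unfolding is_end_iff by blast
    obtain s s' where s: "follows s r" "follows s' r'"
      using follower_exists r(1,2) by meson
    then have sS: "ray S s" "ray S s'"
      unfolding follows_def by simp_all
    have "end_of T r \<noteq> end_of T r'"
      using \<open>\<omega> \<noteq> \<omega>'\<close> r(3,4) by simp
    then have "end_of S s \<noteq> end_of S s'"
      using follows_rays_equiv[OF r(1) s(1) r(2) s(2)]
      unfolding end_of_eq_iff[OF wf_S sS] end_of_eq_iff[OF wf_T r(1,2)] by blast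
    moreover have "is_end S (end_of S s)" "is_end S (end_of S s')"
      using sS unfolding is_end_iff by blast+
    ultimately obtain A B where AB: "separation S A B" "finite (A \<inter> B)" "card (A \<inter> B) \<le> K"
        "distinguishes A B (end_of S s) (end_of S s')"
      using K by blast
    show "\<exists>A' B'. separation T A' B' \<and> finite (A' \<inter> B') \<and> card (A' \<inter> B') \<le> K * N
        \<and> distinguishes A' B' \<omega> \<omega>'"
      using separation_T_fibres[OF AB(1)] order_of_T_fibres_separation[OF AB(1-3)]
        distinguishes_T_fibres[OF r(1) s(1) r(2) s(2) AB(1,2,4)] r(3,4) by blast
  qed
qed

end

section \<open>Decompositions\<close>

lemma subgraph_connected_on:
  assumes "subgraph F G" "connected_graph F"
  shows "connected_on G (verts F)"
proof -
  have "edges F \<inter> verts F \<times> verts F \<subseteq> edges G \<inter> verts F \<times> verts F"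
    using assms(1) unfolding subgraph_def by blast
  then have "reach_within F (verts F) \<subseteq> reach_within G (verts F)"
    by (rule rtrancl_mono)
  with assms show ?thesis
    unfolding subgraph_def connected_graph_def connected_on_def by blast
qed

lemma decomposition_subgraph: "decomposition G H P \<Longrightarrow> h \<in> verts H \<Longrightarrow> subgraph (P h) G"
  by (simp add: decomposition_def)

lemma decomposition_part_subset:
  assumes "decomposition G H P" "h \<in> verts H"
  shows "verts (P h) \<subseteq> verts G"
  using decomposition_subgraph[OF assms] unfolding subgraph_def by simp

lemma decomposition_connected_Hv:
  "decomposition G H P \<Longrightarrow> v \<in> verts G \<Longrightarrow> connected_on H (Hv H P v)"
  by (simp add: decomposition_def)

lemma decomposition_edge_in_part:
  assumes "decomposition G H P" "(x, y) \<in> edges G"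
  shows "\<exists>h\<in>verts H. x \<in> verts (P h) \<and> y \<in> verts (P h)"
proof -
  have "(x, y) \<in> (\<Union>h\<in>verts H. edges (P h))"
    using assms unfolding decomposition_def by simp
  then obtain h where h: "h \<in> verts H" "(x, y) \<in> edges (P h)"
    by blast
  then have "wf_graph (P h)"
    using decomposition_subgraph[OF assms(1)] unfolding subgraph_def by simp
  with h show ?thesis
    using wf_graph_edgeD by metis
qed

lemma honest_edge_shared_vertex:
  assumes "wf_graph H" "decomposition G H P" "honest H P" "(h, h') \<in> edges H"
  shows "\<exists>v\<in>verts G. v \<in> verts (P h) \<and> v \<in> verts (P h')"
proof -
  obtain v where v: "v \<in> verts (P h)" "v \<in> verts (P h')"
    using assms(3,4) unfolding honest_def by blast
  moreover have "h \<in> verts H"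
    using wf_graph_edgeD[OF assms(1,4)] by simp
  ultimately show ?thesis
    using decomposition_part_subset[OF assms(2) \<open>h \<in> verts H\<close>] by blast
qed

lemma accessible_of_decomposition_into_bounded_parts:
  assumes "wf_graph G" "wf_graph H" "decomposition G H P" "point_finite G H P" "honest H P"
    and "\<forall>h\<in>verts H. connected_graph (P h)"
    and "\<forall>h\<in>verts H. finite (verts (P h)) \<and> card (verts (P h)) \<le> N"
    and "accessible H"
  shows "accessible G"
proof -
  interpret bounded_correspondence H G "\<lambda>h v. v \<in> verts (P h)" N
  proof unfold_locales
    fix v
    assume v: "v \<in> verts G"
    show "finite {h \<in> verts H. v \<in> verts (P h)}"
      using assms(4) v unfolding point_finite_def Hv_def by blast
    show "connected_on H {h \<in> verts H. v \<in> verts (P h)}"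
      using decomposition_connected_Hv[OF assms(3) v] unfolding Hv_def .
  next
    fix h
    assume h: "h \<in> verts H"
    then have "{v \<in> verts G. v \<in> verts (P h)} = verts (P h)"
      using decomposition_part_subset[OF assms(3) h] by blast
    moreover have "subgraph (P h) G"
      using decomposition_subgraph[OF assms(3) h] .
    moreover have "connected_graph (P h)"
      using assms(6) h by blast
    ultimately show "finite {v \<in> verts G. v \<in> verts (P h)}"
      "card {v \<in> verts G. v \<in> verts (P h)} \<le> N"
      "connected_on G {v \<in> verts G. v \<in> verts (P h)}"
      using assms(7) h subgraph_connected_on by simp_all
  next
    show "\<exists>h\<in>verts H. v \<in> verts (P h) \<and> v' \<in> verts (P h)" if "(v, v') \<in> edges G" for v v'
      using decomposition_edge_in_part[OF assms(3) that] .
    show "\<exists>v\<in>verts G. v \<in> verts (P h) \<and> v \<in> verts (P h')" if "(h, h') \<in> edges H" for h h'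
      using honest_edge_shared_vertex[OF assms(2,3,5) that] .
  qed (fact assms)+
  show ?thesis
    using accessible_transfer assms(8) .
qed

lemma accessible_decomposition_graph_of_bounded_Hv:
  assumes "wf_graph G" "wf_graph H" "decomposition G H P" "honest H P"
    and "\<forall>h\<in>verts H. connected_graph (P h) \<and> finite (verts (P h))"
    and "\<forall>v\<in>verts G. finite (Hv H P v) \<and> card (Hv H P v) \<le> N"
    and "accessible G"
  shows "accessible H"
proof -
  interpret bounded_correspondence G H "\<lambda>v h. v \<in> verts (P h)" N
  proof unfold_locales
    fix h
    assume h: "h \<in> verts H"
    then have "{v \<in> verts G. v \<in> verts (P h)} = verts (P h)"
      using decomposition_part_subset[OF assms(3) h] by blast
    moreover have "subgraph (P h) G"
      using decomposition_subgraph[OF assms(3) h] .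
    moreover have "connected_graph (P h)" "finite (verts (P h))"
      using assms(5) h by blast+
    ultimately show "finite {v \<in> verts G. v \<in> verts (P h)}"
      "connected_on G {v \<in> verts G. v \<in> verts (P h)}"
      using subgraph_connected_on by simp_all
  next
    fix v
    assume v: "v \<in> verts G"
    show "finite {h \<in> verts H. v \<in> verts (P h)}" "card {h \<in> verts H. v \<in> verts (P h)} \<le> N"
      using assms(6) v unfolding Hv_def by blast+
    show "connected_on H {h \<in> verts H. v \<in> verts (P h)}"
      using decomposition_connected_Hv[OF assms(3) v] unfolding Hv_def .
  next
    show "\<exists>h\<in>verts H. v \<in> verts (P h) \<and> v' \<in> verts (P h)" if "(v, v') \<in> edges G" for v v'
      using decomposition_edge_in_part[OF assms(3) that] .
    show "\<exists>v\<in>verts G. v \<in> verts (P h) \<and> v \<in> verts (P h')" if "(h, h') \<in> edges H" for h h'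
      using honest_edge_shared_vertex[OF assms(2,3,4) that] .
  qed (fact assms)+
  show ?thesis
    using accessible_transfer assms(7) .
qed

theorem lemma3p6:
  fixes G :: "'a graph" and H :: "'b graph" and P :: "'b \<Rightarrow> 'a graph"
  assumes "wf_graph G" and "wf_graph H"
  shows "(decomposition G H P \<and> point_finite G H P \<and> honest H P \<and>
            (\<forall>h\<in>verts H. connected_graph (P h)) \<and>
            (\<exists>N::nat. \<forall>h\<in>verts H. finite (verts (P h)) \<and> card (verts (P h)) \<le> N) \<and>
            accessible H
           \<longrightarrow> accessible G)
       \<and> (decomposition G H P \<and> honest H P \<and>
            (\<forall>h\<in>verts H. connected_graph (P h) \<and> finite (verts (P h))) \<and>
            (\<exists>N::nat. \<forall>v\<in>verts G. finite (Hv H P v) \<and> card (Hv H P v) \<le> N) \<and>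
            accessible G
           \<longrightarrow> accessible H)"
  using accessible_of_decomposition_into_bounded_parts[OF assms]
    accessible_decomposition_graph_of_bounded_Hv[OF assms]
  by blast

end
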